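(* Let $f(x)=\frac1n\sum_{i=1}^n f_i(x)$ on $\mathbb{R}^d$, where each $f_i$ is convex, lower bounded and $L_i$-smooth, and let $x^*$ be a minimizer of $f$. Consider SGD with the DecSPS stepsize (defined in the context) with $c_k=\sqrt{k+1}$ for $k\ge0$ and $c_{-1}=c_0$. Then for every $K\ge1$, $$\mathbb{E}[f(\bar x^K)-f(x^* )]\le\frac{2\tilde L D^2+2\hat\sigma_B^2}{\sqrt K},$$ where $D^2:=\max_{k\in[K-1]}\|x^k-x^*\|^2$, $\tilde L:=\max\{\max_iL_i,\frac{1}{2c_0\gamma_b}\}$ and $\bar x^K=\frac1K\sum_{k=0}^{K-1}x^k$.
   Context: Minibatches: fix a batch size $B$; at each iteration $k$ a subset $\mathcal S_k\subseteq[n]$ with $|\mathcal S_k|=B$ is sampled uniformly at random, independently across iterations. For $\mathcal S\subseteq[n]$, $f_{\mathcal S}:=\frac1{|\mathcal S|}\sum_{i\in\mathcal S}f_i$, $f^*_{\mathcal S}:=\inf_xf_{\mathcal S}(x)$, and $\ell^*_{\mathcal S}$ is a given real number with $\ell^*_{\mathcal S}\le f^*_{\mathcal S}$. SGD: $x^{k+1}=x^k-\gamma_k\nabla f_{\mathcal S_k}(x^k)$. DecSPS stepsize: $\gamma_k:=\frac1{c_k}\min\left\{\frac{f_{\mathcal S_k}(x^k)-\ell^*_{\mathcal S_k}}{\|\nabla f_{\mathcal S_k}(x^k)\|^2},\ c_{k-1}\gamma_{k-1}\right\}$ for $k\ge0$, with $c_{-1}=c_0$ and $\gamma_{-1}=\gamma_b>0$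 a fixed constant; if $\nabla f_{\mathcal S_k}(x^k)=0$ the iterate is not updated. $\hat\sigma_B^2:=\mathbb{E}_{\mathcal S}[f_{\mathcal S}(x^* )-\ell^*_{\mathcal S}]$ with $\mathcal S$ uniform over subsets of size $B$. $[K-1]$ denotes $\{0,\dots,K-1\}$. *)

theory Defs
  imports "HOL-Analysis.Analysis" "HOL-Probability.Probability"
begin

text \<open>Components are indexed by 0..<n (the paper uses 1..n).\<close>

definition favg :: "(nat \<Rightarrow> 'a \<Rightarrow> real) \<Rightarrow> nat \<Rightarrow> 'a \<Rightarrow> real" where
  "favg f n x = (\<Sum>i<n. f i x) / real n"

definition fS :: "(nat \<Rightarrow> 'a \<Rightarrow> real) \<Rightarrow> nat set \<Rightarrow> 'a \<Rightarrow> real" where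
  "fS f S x = (\<Sum>i\<in>S. f i x) / real (card S)"

definition gS :: "(nat \<Rightarrow> 'a \<Rightarrow> 'a::real_vector) \<Rightarrow> nat set \<Rightarrow> 'a \<Rightarrow> 'a" where
  "gS g S x = (1 / real (card S)) *\<^sub>R (\<Sum>i\<in>S. g i x)"

definition batches :: "nat \<Rightarrow> nat \<Rightarrow> nat set set" where
  "batches n B = {S. S \<subseteq> {0..<n} \<and> card S = B}"

text \<open>Sample space for K iterations: independent uniform batches S_0..S_{K-1}.\<close>
definition samples :: "nat \<Rightarrow> nat \<Rightarrow> nat \<Rightarrow> (nat \<Rightarrow> nat set) set" where
  "samples n B K = {0..<K} \<rightarrow>\<^sub>E batches n B"

text \<open>DecSPS parameters c_k = sqrt(k+1); c_{k-1} at k = 0 is c_0 by nat subtraction.\<close>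
definition cdec :: "nat \<Rightarrow> real" where
  "cdec k = sqrt (real k + 1)"

text \<open>State after k steps: (x^k, gamma_{k-1}), with gamma_{-1} = gb.
  If the minibatch gradient vanishes, the Polyak ratio is read as +infinity,
  so gamma_k = c_{k-1} gamma_{k-1} / c_k and the iterate is not moved.\<close>
fun decsps :: "(nat \<Rightarrow> 'a \<Rightarrow> real) \<Rightarrow> (nat \<Rightarrow> 'a \<Rightarrow> 'a::real_inner) \<Rightarrow> (nat set \<Rightarrow> real)
    \<Rightarrow> real \<Rightarrow> 'a \<Rightarrow> (nat \<Rightarrow> nat set) \<Rightarrow> nat \<Rightarrow> 'a \<times> real" where
  "decsps f g ell gb x0 Ss 0 = (x0, gb)"
| "decsps f g ell gb x0 Ss (Suc k) =
    (let (x, gprev) = decsps f g ell gb x0 Ss k;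
         S = Ss k;
         gr = gS g S x;
         gam = (1 / cdec k) *
               (if gr = 0 then cdec (k - 1) * gprev
                else min ((fS f S x - ell S) / (norm gr)\<^sup>2) (cdec (k - 1) * gprev))
     in (x - gam *\<^sub>R gr, gam))"

definition iterate :: "(nat \<Rightarrow> 'a \<Rightarrow> real) \<Rightarrow> (nat \<Rightarrow> 'a \<Rightarrow> 'a::real_inner) \<Rightarrow> (nat set \<Rightarrow> real)
    \<Rightarrow> real \<Rightarrow> 'a \<Rightarrow> (nat \<Rightarrow> nat set) \<Rightarrow> nat \<Rightarrow> 'a" where
  "iterate f g ell gb x0 Ss k = fst (decsps f g ell gb x0 Ss k)"

end

theory Submission
  imports Defs
begin

text \<open>
  Fix the sequence of minibatches and write \<gamma>_k for the DecSPS stepsize. Convexity of f_{S_k}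
  together with the Polyak cap \<gamma>_k |\<nabla>f_{S_k}(x^k)|^2 \<le> (f_{S_k}(x^k) - \<ell>_{S_k}) / c_k gives
    |x^{k+1} - x*|^2 / \<gamma>_k \<le> |x^k - x*|^2 / \<gamma>_k - (2 - 1/c_k) (f_{S_k}(x^k) - f_{S_k}(x*))
                                + (f_{S_k}(x*) - \<ell>_{S_k}) / c_k.
  Smoothness bounds every Polyak ratio below by 1/(2 Ltilde), so the cap c_k \<gamma>_k never drops below
  1/(2 Ltilde) and \<gamma>_k is nonincreasing; the distance terms then telescope to at most
  2 c_{K-1} Ltilde D^2. Taking expectations, x^k depends only on S_0, ..., S_{k-1}, hence
  E f_{S_k}(x^k) = E f(x^k) and E (f_{S_k}(x*) - \<ell>_{S_k}) = \<sigma>_B^2. Finally 2 - 1/c_k \<ge> 1,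
  c_{K-1} = sqrt K, the sum of the 1/c_k is at most 2 sqrt K, and Jensen's inequality passes
  from the iterates to their average.
\<close>

section \<open>Convex functions with Lipschitz gradient\<close>

lemma has_real_derivative_on_line:
  fixes F :: "'a::real_inner \<Rightarrow> real"
  assumes "\<And>y. (F has_derivative (\<lambda>h. G y \<bullet> h)) (at y)"
  shows "((\<lambda>t. F (x + t *\<^sub>R d)) has_real_derivative (G (x + t *\<^sub>R d) \<bullet> d)) (at t)"
proof -
  have "((\<lambda>t. x + t *\<^sub>R d) has_derivative (\<lambda>h. h *\<^sub>R d)) (at t)"
    by (auto intro!: derivative_eq_intros)
  from has_derivative_compose[OF this assms]
  show ?thesis
    by (simp add: has_field_derivative_def inner_scaleR_right mult_commute_abs)
qed

lemma convex_on_gradient_inequality: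
  fixes F :: "'a::real_inner \<Rightarrow> real"
  assumes deriv: "\<And>y. (F has_derivative (\<lambda>h. G y \<bullet> h)) (at y)"
    and convex: "convex_on UNIV F"
  shows "F x + G x \<bullet> (y - x) \<le> F y"
proof -
  let ?p = "\<lambda>t. F (x + t *\<^sub>R (y - x))"
  have "convex_on UNIV ?p"
  proof (rule convex_onI)
    fix t a b :: real
    have "x + ((1 - t) * a + t * b) *\<^sub>R (y - x)
        = (1 - t) *\<^sub>R (x + a *\<^sub>R (y - x)) + t *\<^sub>R (x + b *\<^sub>R (y - x))"
      by (simp add: algebra_simps)
    moreover assume "0 < t" "t < 1"
    ultimately show "?p ((1 - t) *\<^sub>R a + t *\<^sub>R b) \<le> (1 - t) * ?p a + t * ?p b"
      using convex_onD[OF convex, of t "x + a *\<^sub>R (y - x)" "x + b *\<^sub>R (y - x)"] by simp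
  qed simp
  then have "G (x + 0 *\<^sub>R (y - x)) \<bullet> (y - x) * (1 - 0) \<le> ?p 1 - ?p 0"
    using has_real_derivative_on_line[OF deriv, of x "y - x" 0]
    by (intro convex_on_imp_above_tangent) (auto intro: has_field_derivative_at_within)
  then show ?thesis by simp
qed

lemma lipschitz_gradient_upper_bound:
  fixes F :: "'a::real_inner \<Rightarrow> real"
  assumes deriv: "\<And>y. (F has_derivative (\<lambda>h. G y \<bullet> h)) (at y)"
    and lipschitz: "\<And>x y. norm (G x - G y) \<le> L * norm (x - y)"
  shows "F y \<le> F x + G x \<bullet> (y - x) + L / 2 * (norm (y - x))\<^sup>2"
proof -
  define d where "d = y - x"
  let ?h = "\<lambda>t. F (x + t *\<^sub>R d) - t * (G x \<bullet> d) - L / 2 * t\<^sup>2 * (norm d)\<^sup>2"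
  have "?h 1 \<le> ?h 0"
  proof (rule DERIV_nonpos_imp_nonincreasing[where f = ?h])
    fix t :: real assume t: "0 \<le> t" "t \<le> 1"
    have "(G (x + t *\<^sub>R d) - G x) \<bullet> d \<le> norm (G (x + t *\<^sub>R d) - G x) * norm d"
      by (rule norm_cauchy_schwarz)
    also have "\<dots> \<le> L * norm (t *\<^sub>R d) * norm d"
      using lipschitz[of "x + t *\<^sub>R d" x] by (intro mult_right_mono) auto
    finally have "G (x + t *\<^sub>R d) \<bullet> d - G x \<bullet> d - L / 2 * (2 * t) * (norm d)\<^sup>2 \<le> 0"
      using t by (simp add: inner_diff_left power2_eq_square)
    moreover have "(?h has_real_derivative
        G (x + t *\<^sub>R d) \<bullet> d - G x \<bullet> d - L / 2 * (2 * t) * (norm d)\<^sup>2) (at t)"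
      by (auto intro!: derivative_eq_intros has_real_derivative_on_line[OF deriv])
    ultimately show "\<exists>y. (?h has_real_derivative y) (at t) \<and> y \<le> 0" by blast
  qed simp
  then show ?thesis by (simp add: d_def)
qed

lemma polyak_ratio_lower_bound:
  fixes F :: "'a::real_inner \<Rightarrow> real"
  assumes deriv: "\<And>y. (F has_derivative (\<lambda>h. G y \<bullet> h)) (at y)"
    and lipschitz: "\<And>x y. norm (G x - G y) \<le> L * norm (x - y)"
    and lower: "\<And>y. l \<le> F y" and "L > 0" and "G x \<noteq> 0"
  shows "1 / (2 * L) \<le> (F x - l) / (norm (G x))\<^sup>2"
proof -
  \<comment> \<open>a gradient step of length 1/L decreases F by at least (norm (G x))^2 / (2L)\<close>
  define y where "y = x - (1 / L) *\<^sub>R G x"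
  have "l \<le> F y" by (rule lower)
  also have "\<dots> \<le> F x + G x \<bullet> (y - x) + L / 2 * (norm (y - x))\<^sup>2"
    by (rule lipschitz_gradient_upper_bound[OF deriv lipschitz])
  also have "\<dots> = F x - (norm (G x))\<^sup>2 / (2 * L)"
    using \<open>L > 0\<close> by (simp add: y_def dot_square_norm power2_eq_square field_simps)
  finally show ?thesis
    using \<open>L > 0\<close> \<open>G x \<noteq> 0\<close> by (simp add: field_simps)
qed

section \<open>Minibatch averages\<close>

lemma favg_eq_fS: "favg f n = fS f {..<n}"
  by (simp add: fun_eq_iff favg_def fS_def)

lemma has_derivative_fS:
  assumes "\<And>i. i \<in> S \<Longrightarrow> (f i has_derivative (\<lambda>h. g i x \<bullet> h)) (at x)"
  shows "(fS f S has_derivative (\<lambda>h. gS g S x \<bullet> h)) (at x)"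
proof -
  have "((\<lambda>x. \<Sum>i\<in>S. f i x) has_derivative (\<lambda>h. \<Sum>i\<in>S. g i x \<bullet> h)) (at x)"
    using assms by (rule has_derivative_sum)
  from bounded_linear.has_derivative[OF bounded_linear_divide this, of "real (card S)"]
  show ?thesis
    by (simp add: fS_def[abs_def] gS_def inner_sum_left)
qed

lemma convex_on_fS:
  assumes "convex C" and "\<And>i. i \<in> S \<Longrightarrow> convex_on C (f i)"
  shows "convex_on C (fS f S)"
proof -
  have "convex_on C (\<lambda>x. \<Sum>i\<in>S. f i x)"
    using assms(2)
  proof (induction S rule: infinite_finite_induct)
    case (insert i S)
    then show ?case by (simp add: convex_on_add)
  qed (simp_all add: convex_on_const \<open>convex C\<close>)
  then show ?thesis
    unfolding fS_def[abs_def] by (rule convex_on_cdiv[rotated]) simp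
qed

lemma lipschitz_gS:
  assumes "\<And>i x y. i \<in> S \<Longrightarrow> norm (g i x - g i y) \<le> M * norm (x - y)" and "0 \<le> M"
  shows "norm (gS g S x - gS g S y) \<le> M * norm (x - y)"
proof (cases "card S = 0")
  case False
  have "norm (gS g S x - gS g S y) = norm (\<Sum>i\<in>S. g i x - g i y) / real (card S)"
    by (simp add: gS_def sum_subtractf flip: scaleR_diff_right)
  also have "\<dots> \<le> (\<Sum>i\<in>S. M * norm (x - y)) / real (card S)"
    using assms(1) by (intro divide_right_mono sum_norm_le) auto
  also have "\<dots> = M * norm (x - y)"
    using False by simp
  finally show ?thesis .
next
  case True
  then show ?thesis by (simp add: gS_def assms(2))
qed

lemma bdd_below_fS:
  assumes "\<And>i. i \<in> S \<Longrightarrow> bdd_below (range (f i))"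
  shows "bdd_below (range (fS f S))"
proof -
  from assms have "\<forall>i\<in>S. \<exists>m. \<forall>x. m \<le> f i x"
    by (auto simp: bdd_below_def)
  then obtain m where m: "\<And>i x. i \<in> S \<Longrightarrow> m i \<le> f i x"
    by metis
  show ?thesis
  proof (rule bdd_belowI2)
    fix x
    have "(\<Sum>i\<in>S. m i) \<le> (\<Sum>i\<in>S. f i x)"
      by (intro sum_mono m)
    then show "(\<Sum>i\<in>S. m i) / real (card S) \<le> fS f S x"
      unfolding fS_def by (intro divide_right_mono) auto
  qed
qed

lemma finite_batches: "finite (batches n B)"
  unfolding batches_def by (rule finite_subset[of _ "Pow {0..<n}"]) auto

lemma batches_nonempty: "B \<le> n \<Longrightarrow> batches n B \<noteq> {}"
  using obtain_subset_with_card_n[of B "{0..<n}"] by (auto simp: batches_def)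

lemma batches_subset: "S \<in> batches n B \<Longrightarrow> S \<subseteq> {0..<n}"
  by (simp add: batches_def)

lemma card_batches: "card (batches n B) = n choose B"
  unfolding batches_def by (subst n_subsets) auto

lemma card_batches_containing:
  assumes "i < n" and "1 \<le> B"
  shows "card {S \<in> batches n B. i \<in> S} = (n - 1) choose (B - 1)"
proof -
  let ?T = "{T. T \<subseteq> {0..<n} - {i} \<and> card T = B - 1}"
  have "{S \<in> batches n B. i \<in> S} = insert i ` ?T"
  proof (intro equalityI subsetI)
    fix S assume S: "S \<in> {S \<in> batches n B. i \<in> S}"
    then have "finite S" by (auto simp: batches_def intro: finite_subset)
    with S have "S - {i} \<in> ?T" and "S = insert i (S - {i})"
      by (auto simp: batches_def)
    then show "S \<in> insert i ` ?T" by blast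
  next
    fix S assume "S \<in> insert i ` ?T"
    then obtain T where "T \<in> ?T" and "S = insert i T" by auto
    moreover from \<open>T \<in> ?T\<close> have "finite T" and "i \<notin> T"
      by (auto intro: finite_subset)
    ultimately show "S \<in> {S \<in> batches n B. i \<in> S}"
      using assms by (auto simp: batches_def)
  qed
  moreover have "inj_on (insert i) ?T" by (rule inj_onI) blast
  ultimately have "card {S \<in> batches n B. i \<in> S} = card ?T"
    by (simp add: card_image)
  also have "\<dots> = card ({0..<n} - {i}) choose (B - 1)" by (rule n_subsets) auto
  finally show ?thesis using assms by simp
qed

lemma sum_fS_batches:
  assumes "1 \<le> B" and "B \<le> n"
  shows "(\<Sum>S\<in>batches n B. fS f S x) = real (n choose B) * favg f n x"
proof -
  have "(\<Sum>S\<in>batches n B. fS f S x)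
      = (\<Sum>S\<in>batches n B. \<Sum>i\<in>{i\<in>{0..<n}. i \<in> S}. f i x) / real B"
  proof -
    have "{i\<in>{0..<n}. i \<in> S} = S" and "card S = B" if "S \<in> batches n B" for S
      using that by (auto simp: batches_def)
    then show ?thesis
      unfolding fS_def sum_divide_distrib by (intro sum.cong) simp_all
  qed
  also have "(\<Sum>S\<in>batches n B. \<Sum>i\<in>{i\<in>{0..<n}. i \<in> S}. f i x)
      = (\<Sum>i\<in>{0..<n}. \<Sum>S\<in>{S\<in>batches n B. i \<in> S}. f i x)"
    by (rule sum.swap_restrict) (auto simp: finite_batches)
  also have "\<dots> = real ((n - 1) choose (B - 1)) * (\<Sum>i<n. f i x)"
    using assms by (simp add: card_batches_containing sum_distrib_left atLeast0LessThan)
  also have "real ((n - 1) choose (B - 1)) = real B * real (n choose B) / real n"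
  proof -
    have "B * (n choose B) = n * ((n - 1) choose (B - 1))"
      using assms Suc_times_binomial[of "B - 1" "n - 1"] by simp
    then have "real B * real (n choose B) = real n * real ((n - 1) choose (B - 1))"
      by (metis of_nat_mult)
    then show ?thesis using assms by (simp add: field_simps)
  qed
  finally show ?thesis
    using assms by (simp add: favg_def)
qed

section \<open>Uniformly sampled minibatches\<close>

lemma integrable_pmf_of_set:
  fixes h :: "'a \<Rightarrow> real"
  shows "finite A \<Longrightarrow> A \<noteq> {} \<Longrightarrow> integrable (measure_pmf (pmf_of_set A)) h"
  by (rule integrable_measure_pmf_finite) simp

lemma expectation_fS_batches:
  assumes "1 \<le> B" and "B \<le> n"
  shows "measure_pmf.expectation (pmf_of_set (batches n B)) (\<lambda>S. fS f S x) = favg f n x"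
  using assms finite_batches batches_nonempty[OF \<open>B \<le> n\<close>]
  by (simp add: integral_pmf_of_set sum_fS_batches card_batches)

lemma finite_samples: "finite (samples n B K)"
  by (simp add: samples_def finite_PiE finite_batches)

lemma samples_nonempty: "B \<le> n \<Longrightarrow> samples n B K \<noteq> {}"
  by (simp add: samples_def PiE_eq_empty_iff batches_nonempty)

lemma sum_PiE_split_coordinate:
  fixes u :: "('i \<Rightarrow> 'b) \<Rightarrow> real"
  assumes "finite I" and "k \<in> I" and "finite A"
  shows "(\<Sum>Ss\<in>Pi\<^sub>E I (\<lambda>_. A). u Ss) = (\<Sum>S\<in>A. \<Sum>T\<in>Pi\<^sub>E (I - {k}) (\<lambda>_. A). u (T(k := S)))"
proof -
  let ?join = "\<lambda>(S, T). T(k := S)"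
  have "Pi\<^sub>E I (\<lambda>_. A) = ?join ` (A \<times> Pi\<^sub>E (I - {k}) (\<lambda>_. A))"
    using PiE_insert_eq[of k "I - {k}" "\<lambda>_. A"] \<open>k \<in> I\<close> by (simp add: insert_absorb)
  moreover have "inj_on ?join (A \<times> Pi\<^sub>E (I - {k}) (\<lambda>_. A))"
    using inj_combinator[of k "I - {k}" "\<lambda>_. A"] by simp
  ultimately have "(\<Sum>Ss\<in>Pi\<^sub>E I (\<lambda>_. A). u Ss) = (\<Sum>p\<in>A \<times> Pi\<^sub>E (I - {k}) (\<lambda>_. A). u (?join p))"
    by (simp add: sum.reindex)
  then show ?thesis
    by (simp add: sum.cartesian_product split_beta)
qed

text \<open>Under the uniform product distribution, a statistic Y that ignores coordinate k is
  independent of that coordinate.\<close>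

lemma expectation_PiE_coordinate:
  fixes h :: "'b \<Rightarrow> 'c \<Rightarrow> real"
  assumes "finite I" and "k \<in> I" and "finite A" and "A \<noteq> {}"
    and Y: "\<And>Ss S. Y (Ss(k := S)) = Y Ss"
  shows "measure_pmf.expectation (pmf_of_set (Pi\<^sub>E I (\<lambda>_. A))) (\<lambda>Ss. h (Ss k) (Y Ss))
       = measure_pmf.expectation (pmf_of_set (Pi\<^sub>E I (\<lambda>_. A)))
           (\<lambda>Ss. measure_pmf.expectation (pmf_of_set A) (\<lambda>S. h S (Y Ss)))"
proof -
  let ?T = "Pi\<^sub>E (I - {k}) (\<lambda>_. A)"
  have "(\<Sum>Ss\<in>Pi\<^sub>E I (\<lambda>_. A). h (Ss k) (Y Ss)) = (\<Sum>S\<in>A. \<Sum>T\<in>?T. h S (Y T))"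
    using assms by (simp add: sum_PiE_split_coordinate Y)
  also have "\<dots> = (\<Sum>S'\<in>A. \<Sum>T\<in>?T. (\<Sum>S\<in>A. h S (Y T)) / real (card A))"
    using assms by (simp add: sum.swap[of _ A] flip: sum_divide_distrib)
  also have "\<dots> = (\<Sum>Ss\<in>Pi\<^sub>E I (\<lambda>_. A). (\<Sum>S\<in>A. h S (Y Ss)) / real (card A))"
    using assms by (simp add: sum_PiE_split_coordinate Y)
  finally have sums: "(\<Sum>Ss\<in>Pi\<^sub>E I (\<lambda>_. A). h (Ss k) (Y Ss))
      = (\<Sum>Ss\<in>Pi\<^sub>E I (\<lambda>_. A). (\<Sum>S\<in>A. h S (Y Ss)) / real (card A))" .
  have samples: "Pi\<^sub>E I (\<lambda>_. A) \<noteq> {}" "finite (Pi\<^sub>E I (\<lambda>_. A))"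
    using assms by (simp_all add: finite_PiE PiE_eq_empty_iff)
  show ?thesis
    unfolding integral_pmf_of_set[OF \<open>A \<noteq> {}\<close> \<open>finite A\<close>] integral_pmf_of_set[OF samples]
    by (simp add: sums)
qed

lemma convex_on_mean:
  fixes F :: "'a::real_vector \<Rightarrow> real"
  assumes "convex_on UNIV F" and "0 < K"
  shows "F ((1 / real K) *\<^sub>R (\<Sum>k<K. X k)) \<le> (1 / real K) * (\<Sum>k<K. F (X k))"
  using convex_on_sum[OF _ _ assms(1), of "{..<K}" "\<lambda>_. 1 / real K" X] assms(2)
  by (simp add: scaleR_sum_right sum_distrib_left lessThan_empty_iff)

section \<open>The DecSPS recursion\<close>

lemma cdec_pos: "0 < cdec k"
  by (simp add: cdec_def)

lemma cdec_ge_1: "1 \<le> cdec k"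
  by (simp add: cdec_def)

lemma cdec_mono: "k \<le> m \<Longrightarrow> cdec k \<le> cdec m"
  by (simp add: cdec_def)

lemma sum_inverse_cdec_le: "(\<Sum>k<K. 1 / cdec k) \<le> 2 * sqrt (real K)"
proof (induction K)
  case (Suc K)
  let ?a = "sqrt (real K + 1)" and ?b = "sqrt (real K)"
  have "1 = (?a - ?b) * (?a + ?b)"
    by (simp add: algebra_simps)
  also have "\<dots> \<le> (?a - ?b) * (2 * ?a)"
    by (intro mult_left_mono) auto
  finally have "1 / ?a \<le> 2 * ?a - 2 * ?b"
    by (simp add: field_simps)
  with Suc show ?case
    by (simp add: cdec_def add.commute)
qed simp

text \<open>c_{k-1} \<gamma>_{k-1}, the second argument of the minimum defining \<gamma>_k; for k = 0 it is
  c_0 \<gamma>_b, because k - 1 = 0 on nat.\<close>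

definition decsps_cap :: "(nat \<Rightarrow> 'a \<Rightarrow> real) \<Rightarrow> (nat \<Rightarrow> 'a \<Rightarrow> 'a::real_inner) \<Rightarrow> (nat set \<Rightarrow> real)
    \<Rightarrow> real \<Rightarrow> 'a \<Rightarrow> (nat \<Rightarrow> nat set) \<Rightarrow> nat \<Rightarrow> real" where
  "decsps_cap f g ell gb x0 Ss k = cdec (k - 1) * snd (decsps f g ell gb x0 Ss k)"

lemma decsps_cap_0: "decsps_cap f g ell gb x0 Ss 0 = gb"
  by (simp add: decsps_cap_def cdec_def)

lemma decsps_cap_Suc:
  "decsps_cap f g ell gb x0 Ss (Suc k) =
    (if gS g (Ss k) (iterate f g ell gb x0 Ss k) = 0 then decsps_cap f g ell gb x0 Ss k
     else min ((fS f (Ss k) (iterate f g ell gb x0 Ss k) - ell (Ss k))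
                 / (norm (gS g (Ss k) (iterate f g ell gb x0 Ss k)))\<^sup>2)
              (decsps_cap f g ell gb x0 Ss k))"
  using cdec_pos[of k]
  by (cases "decsps f g ell gb x0 Ss k") (simp add: decsps_cap_def iterate_def Let_def)

lemma iterate_Suc:
  "iterate f g ell gb x0 Ss (Suc k) = iterate f g ell gb x0 Ss k
     - (decsps_cap f g ell gb x0 Ss (Suc k) / cdec k) *\<^sub>R gS g (Ss k) (iterate f g ell gb x0 Ss k)"
  using cdec_pos[of k]
  by (cases "decsps f g ell gb x0 Ss k") (simp add: decsps_cap_def iterate_def Let_def)

lemma iterate_cong:
  "(\<And>j. j < k \<Longrightarrow> Ss j = Ss' j) \<Longrightarrow> iterate f g ell gb x0 Ss k = iterate f g ell gb x0 Ss' k"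
proof -
  assume "\<And>j. j < k \<Longrightarrow> Ss j = Ss' j"
  then have "decsps f g ell gb x0 Ss k = decsps f g ell gb x0 Ss' k"
    by (induction k) auto
  then show ?thesis by (simp add: iterate_def)
qed

lemma decsps_cap_Suc_le: "decsps_cap f g ell gb x0 Ss (Suc k) \<le> decsps_cap f g ell gb x0 Ss k"
  by (simp add: decsps_cap_Suc)

lemma decsps_cap_lower_bound:
  assumes "\<rho> \<le> gb"
    and ratio: "\<And>j. j < k \<Longrightarrow> gS g (Ss j) (iterate f g ell gb x0 Ss j) \<noteq> 0 \<Longrightarrow>
      \<rho> \<le> (fS f (Ss j) (iterate f g ell gb x0 Ss j) - ell (Ss j))
            / (norm (gS g (Ss j) (iterate f g ell gb x0 Ss j)))\<^sup>2"
  shows "\<rho> \<le> decsps_cap f g ell gb x0 Ss k"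
  using ratio
proof (induction k)
  case 0
  then show ?case by (simp add: decsps_cap_0 \<open>\<rho> \<le> gb\<close>)
next
  case (Suc k)
  then show ?case by (simp add: decsps_cap_Suc)
qed

lemma sgd_step_distance_bound:
  fixes x xs v :: "'a::real_inner"
  assumes "0 < \<gamma>"
    and gradient_inequality: "F + v \<bullet> (xs - x) \<le> Fs"
    and step_cap: "\<gamma> * (norm v)\<^sup>2 \<le> (F - l) / c"
  shows "(norm (x - \<gamma> *\<^sub>R v - xs))\<^sup>2 / \<gamma>
     \<le> (norm (x - xs))\<^sup>2 / \<gamma> - (2 - 1 / c) * (F - Fs) + (Fs - l) / c"
proof -
  have "(norm (u - \<gamma> *\<^sub>R v))\<^sup>2 = (norm u)\<^sup>2 - 2 * \<gamma> * (v \<bullet> u) + \<gamma>\<^sup>2 * (norm v)\<^sup>2" for u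
    by (simp add: power2_norm_eq_inner inner_diff_left inner_diff_right inner_commute
        algebra_simps power2_eq_square[of \<gamma>])
  moreover have "x - \<gamma> *\<^sub>R v - xs = (x - xs) - \<gamma> *\<^sub>R v"
    by simp
  ultimately have "(norm (x - \<gamma> *\<^sub>R v - xs))\<^sup>2
      = (norm (x - xs))\<^sup>2 - 2 * \<gamma> * (v \<bullet> (x - xs)) + \<gamma>\<^sup>2 * (norm v)\<^sup>2"
    by metis
  then have "(norm (x - \<gamma> *\<^sub>R v - xs))\<^sup>2 / \<gamma>
      = (norm (x - xs))\<^sup>2 / \<gamma> - 2 * (v \<bullet> (x - xs)) + \<gamma> * (norm v)\<^sup>2"
    using \<open>0 < \<gamma>\<close> by (simp add: add_divide_distrib diff_divide_distrib power2_eq_square)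
  moreover have "F - Fs \<le> v \<bullet> (x - xs)"
    using gradient_inequality by (simp add: inner_diff_right)
  moreover have "(F - l) / c = (F - Fs) / c + (Fs - l) / c"
    by (simp add: diff_divide_distrib)
  ultimately show ?thesis
    using step_cap by (simp add: left_diff_distrib)
qed

lemma telescoping_weighted_sum:
  fixes r \<gamma> :: "nat \<Rightarrow> real"
  assumes "\<And>k. k < m \<Longrightarrow> \<gamma> (Suc k) \<le> \<gamma> k" and "\<And>k. k \<le> m \<Longrightarrow> 0 < \<gamma> k"
    and "\<And>k. k \<le> m \<Longrightarrow> r k \<le> D"
  shows "(\<Sum>k\<le>m. (r k - r (Suc k)) / \<gamma> k) \<le> (D - r (Suc m)) / \<gamma> m"
  using assms
proof (induction m)
  case 0
  then show ?case by (simp add: divide_right_mono)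
next
  case (Suc m)
  have "(D - r (Suc m)) / \<gamma> m \<le> (D - r (Suc m)) / \<gamma> (Suc m)"
    using Suc.prems by (intro divide_left_mono) auto
  with Suc show ?case
    by (simp add: diff_divide_distrib)
qed

section \<open>Convergence in expectation\<close>

definition Ltilde :: "(nat \<Rightarrow> real) \<Rightarrow> nat \<Rightarrow> real \<Rightarrow> real" where
  "Ltilde L n gb = max (Max (L ` {0..<n})) (1 / (2 * cdec 0 * gb))"

context
  fixes f :: "nat \<Rightarrow> 'a::euclidean_space \<Rightarrow> real" and g :: "nat \<Rightarrow> 'a \<Rightarrow> 'a"
    and L :: "nat \<Rightarrow> real" and ell :: "nat set \<Rightarrow> real"
    and n B :: nat and gb :: real and x0 xs :: 'a
  assumes batch_size: "1 \<le> B" "B \<le> n"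
    and grad: "\<And>i x. i < n \<Longrightarrow> (f i has_derivative (\<lambda>h. g i x \<bullet> h)) (at x)"
    and conv: "\<And>i. i < n \<Longrightarrow> convex_on UNIV (f i)"
    and lb: "\<And>i. i < n \<Longrightarrow> bdd_below (range (f i))"
    and smooth: "\<And>i x y. i < n \<Longrightarrow> norm (g i x - g i y) \<le> L i * norm (x - y)"
    and opt: "\<And>x. favg f n xs \<le> favg f n x"
    and ell: "\<And>S. S \<in> batches n B \<Longrightarrow> ell S \<le> (INF x. fS f S x)"
    and gb_pos: "0 < gb"
begin

lemma inverse_gb_le_Ltilde: "1 / (2 * gb) \<le> Ltilde L n gb"
  by (simp add: Ltilde_def cdec_def)

lemma Ltilde_pos: "0 < Ltilde L n gb"
proof -
  have "0 < 1 / (2 * gb)"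
    using gb_pos by simp
  with inverse_gb_le_Ltilde show ?thesis
    by linarith
qed

lemma inverse_Ltilde_le: "1 / (2 * Ltilde L n gb) \<le> gb"
  using inverse_gb_le_Ltilde gb_pos Ltilde_pos by (simp add: field_simps)

lemma L_le_Ltilde: "i < n \<Longrightarrow> L i \<le> Ltilde L n gb"
  unfolding Ltilde_def by (intro max.coboundedI1 Max_ge) auto

lemma convex_on_favg: "convex_on UNIV (favg f n)"
  unfolding favg_eq_fS by (intro convex_on_fS conv) auto

lemma fS_gradient_inequality:
  assumes "S \<in> batches n B"
  shows "fS f S x + gS g S x \<bullet> (y - x) \<le> fS f S y"
proof -
  have "i < n" if "i \<in> S" for i
    using batches_subset[OF assms] that by auto
  then show ?thesis
    by (intro convex_on_gradient_inequality has_derivative_fS convex_on_fS grad conv) auto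
qed

lemma gS_lipschitz:
  assumes "S \<in> batches n B"
  shows "norm (gS g S x - gS g S y) \<le> Ltilde L n gb * norm (x - y)"
proof (rule lipschitz_gS)
  fix i x y assume "i \<in> S"
  then have "i < n"
    using batches_subset[OF assms] by auto
  then show "norm (g i x - g i y) \<le> Ltilde L n gb * norm (x - y)"
    using smooth L_le_Ltilde by (meson mult_right_mono norm_ge_zero order_trans)
qed (use Ltilde_pos in simp)

lemma ell_le_fS:
  assumes "S \<in> batches n B"
  shows "ell S \<le> fS f S y"
proof -
  have "bdd_below (range (fS f S))"
    using batches_subset[OF assms] lb by (intro bdd_below_fS) auto
  then have "(INF x. fS f S x) \<le> fS f S y"
    by (rule cINF_lower) simp
  with ell[OF assms] show ?thesis
    by linarith
qed

lemma decsps_cap_ge: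
  assumes "\<And>j. j < k \<Longrightarrow> Ss j \<in> batches n B"
  shows "1 / (2 * Ltilde L n gb) \<le> decsps_cap f g ell gb x0 Ss k"
proof (rule decsps_cap_lower_bound[OF inverse_Ltilde_le])
  fix j assume "j < k"
  then have S: "Ss j \<in> batches n B" by (rule assms)
  show "1 / (2 * Ltilde L n gb)
      \<le> (fS f (Ss j) (iterate f g ell gb x0 Ss j) - ell (Ss j))
          / (norm (gS g (Ss j) (iterate f g ell gb x0 Ss j)))\<^sup>2"
    if "gS g (Ss j) (iterate f g ell gb x0 Ss j) \<noteq> 0"
    using that Ltilde_pos batches_subset[OF S]
    by (intro polyak_ratio_lower_bound[where F = "fS f (Ss j)"] has_derivative_fS grad
        gS_lipschitz[OF S] ell_le_fS[OF S]) auto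
qed

lemma decsps_step_bound:
  assumes S: "Ss k \<in> batches n B"
    and cap: "0 < decsps_cap f g ell gb x0 Ss (Suc k)"
  defines "x \<equiv> iterate f g ell gb x0 Ss" and "\<gamma> \<equiv> decsps_cap f g ell gb x0 Ss (Suc k) / cdec k"
  shows "(2 - 1 / cdec k) * (fS f (Ss k) (x k) - fS f (Ss k) xs)
     \<le> ((norm (x k - xs))\<^sup>2 - (norm (x (Suc k) - xs))\<^sup>2) / \<gamma> + (fS f (Ss k) xs - ell (Ss k)) / cdec k"
proof -
  let ?v = "gS g (Ss k) (x k)"
  have \<gamma>_pos: "0 < \<gamma>"
    using cap cdec_pos[of k] by (simp add: \<gamma>_def)
  have step_cap: "\<gamma> * (norm ?v)\<^sup>2 \<le> (fS f (Ss k) (x k) - ell (Ss k)) / cdec k"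
  proof (cases "?v = 0")
    case True
    then show ?thesis
      using ell_le_fS[OF S] cdec_pos[of k] by simp
  next
    case False
    then have "decsps_cap f g ell gb x0 Ss (Suc k) \<le> (fS f (Ss k) (x k) - ell (Ss k)) / (norm ?v)\<^sup>2"
      by (simp add: x_def decsps_cap_Suc)
    then have "\<gamma> \<le> (fS f (Ss k) (x k) - ell (Ss k)) / (norm ?v)\<^sup>2 / cdec k"
      unfolding \<gamma>_def using cdec_pos[of k] by (intro divide_right_mono) auto
    then show ?thesis
      using False cdec_pos[of k] by (simp add: field_simps)
  qed
  have "(norm (x k - \<gamma> *\<^sub>R ?v - xs))\<^sup>2 / \<gamma>
      \<le> (norm (x k - xs))\<^sup>2 / \<gamma> - (2 - 1 / cdec k) * (fS f (Ss k) (x k) - fS f (Ss k) xs)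
        + (fS f (Ss k) xs - ell (Ss k)) / cdec k"
    by (rule sgd_step_distance_bound[OF \<gamma>_pos fS_gradient_inequality[OF S] step_cap])
  moreover have "x (Suc k) = x k - \<gamma> *\<^sub>R ?v"
    unfolding x_def \<gamma>_def by (rule iterate_Suc)
  ultimately show ?thesis
    by (simp add: diff_divide_distrib)
qed

lemma decsps_run_bound:
  assumes "0 < K" and batches: "\<And>j. j < K \<Longrightarrow> Ss j \<in> batches n B"
  shows "(\<Sum>k<K. (2 - 1 / cdec k)
            * (fS f (Ss k) (iterate f g ell gb x0 Ss k) - fS f (Ss k) xs))
     \<le> 2 * cdec (K - 1) * Ltilde L n gb
          * Max ((\<lambda>k. (norm (iterate f g ell gb x0 Ss k - xs))\<^sup>2) ` {..<K})
       + (\<Sum>k<K. (fS f (Ss k) xs - ell (Ss k)) / cdec k)"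
proof -
  define x where "x = iterate f g ell gb x0 Ss"
  define cap where "cap = decsps_cap f g ell gb x0 Ss"
  define \<gamma> where "\<gamma> k = cap (Suc k) / cdec k" for k
  define r where "r k = (norm (x k - xs))\<^sup>2" for k
  define D where "D = Max (r ` {..<K})"
  obtain m where m: "K = Suc m"
    using \<open>0 < K\<close> gr0_implies_Suc by blast
  have cap_ge: "1 / (2 * Ltilde L n gb) \<le> cap k" if "k \<le> K" for k
    unfolding cap_def using that by (intro decsps_cap_ge batches) auto
  have cap_pos: "0 < cap k" if "k \<le> K" for k
    using cap_ge[OF that] Ltilde_pos by (simp add: order_less_le_trans[rotated])
  have \<gamma>_pos: "0 < \<gamma> k" if "k \<le> m" for k
    using cap_pos[of "Suc k"] cdec_pos[of k] that m by (simp add: \<gamma>_def)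
  have \<gamma>_antimono: "\<gamma> (Suc k) \<le> \<gamma> k" if "k < m" for k
    unfolding \<gamma>_def using cap_pos[of "Suc k"] that m
    by (intro frac_le) (auto simp: cap_def decsps_cap_Suc_le cdec_pos cdec_mono less_imp_le)
  have D_ge: "r k \<le> D" if "k \<le> m" for k
    unfolding D_def using that m by (intro Max_ge) auto
  have "0 \<le> D"
    using D_ge[of 0] zero_le_power2[of "norm (x 0 - xs)"] unfolding r_def by linarith
  have "(\<Sum>k\<le>m. (r k - r (Suc k)) / \<gamma> k) \<le> (D - r (Suc m)) / \<gamma> m"
    using \<gamma>_antimono \<gamma>_pos D_ge by (rule telescoping_weighted_sum) auto
  also have "\<dots> \<le> D / \<gamma> m"
    using \<gamma>_pos[of m] by (intro divide_right_mono) (auto simp: r_def)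
  also have "\<dots> \<le> 2 * cdec (K - 1) * Ltilde L n gb * D"
  proof -
    have "1 / \<gamma> m \<le> 2 * cdec m * Ltilde L n gb"
      using cap_ge[of K] cap_pos[of K] Ltilde_pos cdec_pos[of m] m by (simp add: \<gamma>_def field_simps)
    then show ?thesis
      using mult_left_mono[OF _ \<open>0 \<le> D\<close>] m by (fastforce simp: mult_ac)
  qed
  finally have telescoped: "(\<Sum>k<K. (r k - r (Suc k)) / \<gamma> k) \<le> 2 * cdec (K - 1) * Ltilde L n gb * D"
    by (simp add: m lessThan_Suc_atMost)
  have "(2 - 1 / cdec k) * (fS f (Ss k) (x k) - fS f (Ss k) xs)
      \<le> (r k - r (Suc k)) / \<gamma> k + (fS f (Ss k) xs - ell (Ss k)) / cdec k" if "k < K" for k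
    using decsps_step_bound[of Ss k] batches[OF that] cap_pos[of "Suc k"] that
    unfolding x_def \<gamma>_def r_def cap_def by simp
  then have "(\<Sum>k<K. (2 - 1 / cdec k) * (fS f (Ss k) (x k) - fS f (Ss k) xs))
      \<le> (\<Sum>k<K. (r k - r (Suc k)) / \<gamma> k + (fS f (Ss k) xs - ell (Ss k)) / cdec k)"
    by (intro sum_mono) auto
  with telescoped show ?thesis
    unfolding x_def[symmetric] r_def[symmetric] D_def[symmetric] sum.distrib by linarith
qed

lemma decsps_expected_gap_sum:
  assumes "1 \<le> K"
  shows "(\<Sum>k<K. measure_pmf.expectation (pmf_of_set (samples n B K))
            (\<lambda>Ss. favg f n (iterate f g ell gb x0 Ss k) - favg f n xs))
     \<le> 2 * sqrt (real K) * Ltilde L n gb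
          * measure_pmf.expectation (pmf_of_set (samples n B K))
              (\<lambda>Ss. Max ((\<lambda>k. (norm (iterate f g ell gb x0 Ss k - xs))\<^sup>2) ` {..<K}))
       + 2 * sqrt (real K)
          * measure_pmf.expectation (pmf_of_set (batches n B)) (\<lambda>S. fS f S xs - ell S)"
proof -
  let ?E = "measure_pmf.expectation (pmf_of_set (samples n B K))"
  let ?x = "iterate f g ell gb x0"
  let ?D = "\<lambda>Ss. Max ((\<lambda>k. (norm (?x Ss k - xs))\<^sup>2) ` {..<K})"
  let ?w = "\<lambda>k. 2 - 1 / cdec k"
  define \<sigma> where "\<sigma> = measure_pmf.expectation (pmf_of_set (batches n B)) (\<lambda>S. fS f S xs - ell S)"
  define gap where "gap k = ?E (\<lambda>Ss. favg f n (?x Ss k) - favg f n xs)" for k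
  have samples: "samples n B K = Pi\<^sub>E {0..<K} (\<lambda>_. batches n B)"
    by (simp add: samples_def)
  have sample_batches: "Ss j \<in> batches n B" if "Ss \<in> samples n B K" and "j < K" for Ss j
    using that by (auto simp: samples)
  note batches = finite_batches batches_nonempty[OF batch_size(2)]
  have integrable: "integrable (measure_pmf (pmf_of_set (samples n B K))) h" for h :: "_ \<Rightarrow> real"
    using finite_samples samples_nonempty[OF batch_size(2)] by (rule integrable_pmf_of_set)
  have batch_integrable: "integrable (measure_pmf (pmf_of_set (batches n B))) h" for h :: "_ \<Rightarrow> real"
    using batches by (rule integrable_pmf_of_set)
  have gap_eq: "gap k = ?E (\<lambda>Ss. fS f (Ss k) (?x Ss k) - fS f (Ss k) xs)" if "k < K" for k
  proof -
    have "?E (\<lambda>Ss. fS f (Ss k) (?x Ss k) - fS f (Ss k) xs)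
        = ?E (\<lambda>Ss. measure_pmf.expectation (pmf_of_set (batches n B))
                 (\<lambda>S. fS f S (?x Ss k) - fS f S xs))"
      unfolding samples using that batches
      by (intro expectation_PiE_coordinate[where h = "\<lambda>S y. fS f S y - fS f S xs"
            and Y = "\<lambda>Ss. ?x Ss k"]) (auto intro: iterate_cong)
    also have "\<dots> = gap k"
      unfolding gap_def using batch_integrable by (simp add: expectation_fS_batches[OF batch_size])
    finally show ?thesis by simp
  qed
  have noise_eq: "?E (\<lambda>Ss. fS f (Ss k) xs - ell (Ss k)) = \<sigma>" if "k < K" for k
    unfolding samples \<sigma>_def using that batches
    by (subst expectation_PiE_coordinate[where h = "\<lambda>S _. fS f S xs - ell S" and Y = "\<lambda>_. ()"]) auto
  have "0 \<le> gap k" for k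
    unfolding gap_def using opt by (intro integral_nonneg_AE) auto
  moreover have "1 \<le> ?w k" for k
    using cdec_ge_1[of k] by simp
  ultimately have "(\<Sum>k<K. gap k) \<le> (\<Sum>k<K. ?w k * gap k)"
    by (intro sum_mono) (metis mult_1 mult_right_mono)
  also have "\<dots> = (\<Sum>k<K. ?w k * ?E (\<lambda>Ss. fS f (Ss k) (?x Ss k) - fS f (Ss k) xs))"
    by (intro sum.cong refl) (simp add: gap_eq)
  also have "\<dots> = ?E (\<lambda>Ss. \<Sum>k<K. ?w k * (fS f (Ss k) (?x Ss k) - fS f (Ss k) xs))"
    by (simp add: integral_sum integrable)
  also have "\<dots> \<le> ?E (\<lambda>Ss. 2 * cdec (K - 1) * Ltilde L n gb * ?D Ss
                          + (\<Sum>k<K. (fS f (Ss k) xs - ell (Ss k)) / cdec k))"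
    using \<open>1 \<le> K\<close> set_pmf_of_set[OF samples_nonempty[OF batch_size(2)] finite_samples]
    by (intro integral_mono_AE integrable AE_pmfI decsps_run_bound sample_batches) auto
  also have "\<dots> = 2 * cdec (K - 1) * Ltilde L n gb * ?E ?D
                  + (\<Sum>k<K. ?E (\<lambda>Ss. fS f (Ss k) xs - ell (Ss k)) / cdec k)"
    by (simp add: integral_sum integrable)
  also have "\<dots> = 2 * sqrt (real K) * Ltilde L n gb * ?E ?D + \<sigma> * (\<Sum>k<K. 1 / cdec k)"
    using \<open>1 \<le> K\<close> by (simp add: noise_eq sum_distrib_left cdec_def of_nat_diff)
  also have "\<dots> \<le> 2 * sqrt (real K) * Ltilde L n gb * ?E ?D + \<sigma> * (2 * sqrt (real K))"
    unfolding \<sigma>_def using batches ell_le_fS sum_inverse_cdec_le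
    by (intro add_left_mono mult_left_mono integral_nonneg_AE) (auto simp: AE_measure_pmf_iff)
  finally show ?thesis
    by (simp add: gap_def \<sigma>_def mult_ac)
qed

end

theorem corollary2:
  fixes f :: "nat \<Rightarrow> 'a::euclidean_space \<Rightarrow> real" and g :: "nat \<Rightarrow> 'a \<Rightarrow> 'a"
    and L :: "nat \<Rightarrow> real" and ell :: "nat set \<Rightarrow> real"
    and n B K :: nat and gb :: real and x0 xs :: 'a
  assumes "1 \<le> B" and "B \<le> n"
    and grad: "\<And>i x. i < n \<Longrightarrow> (f i has_derivative (\<lambda>h. g i x \<bullet> h)) (at x)"
    and conv: "\<And>i. i < n \<Longrightarrow> convex_on UNIV (f i)"
    and lb: "\<And>i. i < n \<Longrightarrow> bdd_below (range (f i))"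
    and smooth: "\<And>i x y. i < n \<Longrightarrow> norm (g i x - g i y) \<le> L i * norm (x - y)"
    and opt: "\<And>x. favg f n xs \<le> favg f n x"
    and ell: "\<And>S. S \<in> batches n B \<Longrightarrow> ell S \<le> (INF x. fS f S x)"
    and "gb > 0" and "K \<ge> 1"
  shows "measure_pmf.expectation (pmf_of_set (samples n B K))
           (\<lambda>Ss. favg f n ((1 / real K) *\<^sub>R (\<Sum>k<K. iterate f g ell gb x0 Ss k)) - favg f n xs)
         \<le> (2 * max (Max (L ` {0..<n})) (1 / (2 * cdec 0 * gb))
              * measure_pmf.expectation (pmf_of_set (samples n B K))
                  (\<lambda>Ss. Max ((\<lambda>k. (norm (iterate f g ell gb x0 Ss k - xs))\<^sup>2) ` {..<K}))
            + 2 * measure_pmf.expectation (pmf_of_set (batches n B)) (\<lambda>S. fS f S xs - ell S))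
           / sqrt (real K)"
proof -
  let ?E = "measure_pmf.expectation (pmf_of_set (samples n B K))"
  let ?x = "iterate f g ell gb x0"
  let ?D = "\<lambda>Ss. Max ((\<lambda>k. (norm (?x Ss k - xs))\<^sup>2) ` {..<K})"
  let ?\<sigma> = "measure_pmf.expectation (pmf_of_set (batches n B)) (\<lambda>S. fS f S xs - ell S)"
  have integrable: "integrable (measure_pmf (pmf_of_set (samples n B K))) h" for h :: "_ \<Rightarrow> real"
    using finite_samples samples_nonempty[OF \<open>B \<le> n\<close>] by (rule integrable_pmf_of_set)
  have "?E (\<lambda>Ss. favg f n ((1 / real K) *\<^sub>R (\<Sum>k<K. ?x Ss k)) - favg f n xs)
      \<le> ?E (\<lambda>Ss. (1 / real K) * (\<Sum>k<K. favg f n (?x Ss k) - favg f n xs))"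
    using convex_on_mean[OF convex_on_favg[OF assms(1-9)]] \<open>K \<ge> 1\<close>
    by (intro integral_mono integrable) (simp add: sum_subtractf right_diff_distrib)
  also have "\<dots> = (1 / real K) * (\<Sum>k<K. ?E (\<lambda>Ss. favg f n (?x Ss k) - favg f n xs))"
    by (simp add: integral_sum integrable)
  also have "\<dots> \<le> (1 / real K)
      * (2 * sqrt (real K) * Ltilde L n gb * ?E ?D + 2 * sqrt (real K) * ?\<sigma>)"
    using decsps_expected_gap_sum[OF assms] by (intro mult_left_mono) auto
  also have "\<dots> = (2 * Ltilde L n gb * ?E ?D + 2 * ?\<sigma>) / sqrt (real K)"
    using \<open>K \<ge> 1\<close> by (simp add: field_simps) (simp flip: mult.assoc)
  finally show ?thesis
    unfolding Ltilde_def .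
qed

end
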